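(* For every MLL proof structure $\Theta$, every run of Algorithm A on input $\Theta$ terminates.
   Context: MLL formulas (with a single atom $p$) are given by $F ::= p \mid p^\bot \mid F\otimes G \mid F \wp G$, where $\wp$ denotes par. MLL links are: an ID-link, with two conclusions $p$ and $p^\bot$; a $\otimes$-link, with left premise $F$, right premise $G$ and conclusion $F\otimes G$; a $\wp$-link, with left premise $F$, right premise $G$ and conclusion $F\wp G$. An MLL proof structure $\Theta$ is a finite set of links such that each conclusion of a link is a premise of at most one other link of $\Theta$, and each premise of a link is a conclusion of exactly one other link; a conclusion of $\Theta$ is a formula occurrence that is not a premise of any link. Extreme-left DR-graph $S_{\forall\ell}(\Theta)$: the undirected graph on formula occurrences in which each ID-link joins its two conclusions, each $\otimes$-link joins its conclusion to both premises, and each $\wp$-link joins its conclusion to its left premise only. deNM-trees: finite trees with labeled nodes (carrying a label set of symbols $\ell_L$, $r_L$, $L$ a $\wp$-link) and $\wp$-nodes (labeled by a $\wp$-link $L$, of degree 1 or 2, with a port "above" and a port "below"; a degree-1 $\wp$-node is attached only through its port above). Translation $T(\Theta)$ (undefined unless $S_{\forall\ell}(\Theta)$ is a tree). If $\Theta$ is a single ID-link, $T(\Theta)$ is one degree-0 labeled node with label set $\emptyset$. Otherwise each link $L$ gives a piece: (i) ID-link, case 1: one conclusion $F$ is the right premise of a $\wp$-link $L'$ or a conclusion of $\Theta$; if $F^\bot$ is a premise of a $\wp$-link, $T(\Theta)$ is undefined; otherwise a degree-1 labeled node attached to the piece of the link having $F^\bot$ as premise, labeled $\{r_{L'}\}$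 if $F$ is the right premise of $L'$ and $\emptyset$ otherwise. Case 2 (otherwise): if both conclusions are premises of $\wp$-links, undefined; otherwise a degree-2 labeled node attached to the pieces of the links having the conclusions as premises, labeled $\{\ell_{L'}\}$ if a conclusion is the left premise of a $\wp$-link $L'$, else $\emptyset$. (ii) $\otimes$-link, case 1 (conclusion is a conclusion of $\Theta$ or right premise of a $\wp$-link $L'$): a degree-2 labeled node attached to the pieces of the links producing its premises, labeled $\{r_{L'}\}$ or $\emptyset$ accordingly; case 2 (otherwise): a degree-3 labeled node attached additionally to the piece of the link having its conclusion as premise, labeled $\{\ell_{L'}\}$ if the conclusion is the left premise of a $\wp$-link $L'$, else $\emptyset$. (iii) $\wp$-link $L$: a $\wp$-node $n_L$ whose port above is attached to the piece of the link producing the left premise of $L$; case 1 (conclusion is the right premise of $\wp$-link $L'$): port below attached to a degree-1 labeled node labeled $\{r_{L'}\}$; case 2 (conclusion is the left premise of $\wp$-link $L'$): port below attached to a degree-2 labeled node labeled $\{\ell_{L'}\}$ which is attached to the port above of $n_{L'}$; case 3 (otherwise): only $n_L$, of degree 1 if its conclusion is a conclusion of $\Theta$, else its port below is attached to the piece of the link having its conclusion as premise. $T(\Theta)$ connects all pieces. Rewriting with one designated active labeled node: ($\wp$-elimination) if the active node $n$ is adjacent to a $\wp$-node $n_L$ through $n_L$'s port above and $n$'s label set contains $\ell_L$ and $r_L$, delete $n_L$ (its neighbour through the port below, if any, becomes adjacent to $n$); (union) if the active node is adjacent to a labeled node, merge them into one active node labeled by the union of label sets; (local jump) if the active node is adjacent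 to a $\wp$-node $n_L$ through $n_L$'s port below, the active node becomes the labeled node whose label set contains $r_L$ (tree unchanged). $S_{\rm full}$ is the set of all $\ell_L, r_L$ for $\wp$-links $L$ of $\Theta$. Algorithm A on input $\Theta$: (1) if $T(\Theta)$ is undefined, output no; (2) select an arbitrary labeled node as active; (3) rewrite using the three rules (in any order); (4) if local jump is applied to a $\wp$-node to which it was already applied, output no; (5) when no rule applies to the current tree $T'$, output yes if $T'$ is exactly one degree-0 node with label set $S_{\rm full}$, and no otherwise. *)

theory Defs
  imports Main
begin

datatype form = Atom | NegAtom | Tens form form | Par form form

text \<open>Links over formula occurrences of type 'o.
  IdL a b: ID-link with conclusions a (typed p) and b (typed p-dual).
  TensL a b c / ParL a b c: left premise a, right premise b, conclusion c.\<close>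
datatype 'o link = IdL 'o 'o | TensL 'o 'o 'o | ParL 'o 'o 'o

fun concls :: "'o link \<Rightarrow> 'o set" where
  "concls (IdL a b) = {a, b}"
| "concls (TensL a b c) = {c}"
| "concls (ParL a b c) = {c}"

fun prems :: "'o link \<Rightarrow> 'o set" where
  "prems (IdL a b) = {}"
| "prems (TensL a b c) = {a, b}"
| "prems (ParL a b c) = {a, b}"

fun is_par :: "'o link \<Rightarrow> bool" where
  "is_par (ParL a b c) = True"
| "is_par _ = False"

fun well_typed :: "('o \<Rightarrow> form) \<Rightarrow> 'o link \<Rightarrow> bool" where
  "well_typed \<phi> (IdL a b) = (\<phi> a = Atom \<and> \<phi> b = NegAtom)"
| "well_typed \<phi> (TensL a b c) = (a \<noteq> b \<and> \<phi> c = Tens (\<phi> a) (\<phi> b))"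
| "well_typed \<phi> (ParL a b c) = (a \<noteq> b \<and> \<phi> c = Par (\<phi> a) (\<phi> b))"

definition occs :: "'o link set \<Rightarrow> 'o set" where
  "occs \<Theta> = (\<Union>L\<in>\<Theta>. concls L \<union> prems L)"

definition proof_structure :: "('o \<Rightarrow> form) \<Rightarrow> 'o link set \<Rightarrow> bool" where
  "proof_structure \<phi> \<Theta> \<longleftrightarrow>
     finite \<Theta> \<and>
     (\<forall>L\<in>\<Theta>. well_typed \<phi> L) \<and>
     (\<forall>x\<in>occs \<Theta>. \<exists>!L. L \<in> \<Theta> \<and> x \<in> concls L) \<and>
     (\<forall>x. \<forall>L\<in>\<Theta>. \<forall>M\<in>\<Theta>. x \<in> prems L \<longrightarrow> x \<in> prems M \<longrightarrow> L = M)"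

definition is_concl_of :: "'o link set \<Rightarrow> 'o \<Rightarrow> bool" where
  "is_concl_of \<Theta> x \<longleftrightarrow> x \<in> occs \<Theta> \<and> (\<forall>L\<in>\<Theta>. x \<notin> prems L)"

definition left_of :: "'o link set \<Rightarrow> 'o \<Rightarrow> 'o link \<Rightarrow> bool" where
  "left_of \<Theta> x L' \<longleftrightarrow> L' \<in> \<Theta> \<and> (\<exists>b c. L' = ParL x b c)"

definition right_of :: "'o link set \<Rightarrow> 'o \<Rightarrow> 'o link \<Rightarrow> bool" where
  "right_of \<Theta> x L' \<longleftrightarrow> L' \<in> \<Theta> \<and> (\<exists>a c. L' = ParL a x c)"

definition par_prem :: "'o link set \<Rightarrow> 'o \<Rightarrow> bool" where
  "par_prem \<Theta> x \<longleftrightarrow> (\<exists>L'. left_of \<Theta> x L' \<or> right_of \<Theta> x L')"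

definition sedges :: "'o link set \<Rightarrow> 'o set set" where
  "sedges \<Theta> =
     {{a, b} | a b. IdL a b \<in> \<Theta>} \<union>
     {{c, a} | a b c. TensL a b c \<in> \<Theta>} \<union>
     {{c, b} | a b c. TensL a b c \<in> \<Theta>} \<union>
     {{c, a} | a b c. ParL a b c \<in> \<Theta>}"

definition adj :: "'v set set \<Rightarrow> ('v \<times> 'v) set" where
  "adj E = {(x, y). {x, y} \<in> E}"

text \<open>A (finite, nonempty) undirected simple graph is a tree iff it is connected and
  acyclic; acyclicity is expressed as: no edge lies on a cycle, i.e. removing any edge
  disconnects its endpoints.\<close>
definition is_tree :: "'v set \<Rightarrow> 'v set set \<Rightarrow> bool" where
  "is_tree V E \<longleftrightarrow>
     finite V \<and> V \<noteq> {} \<and>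
     (\<forall>e\<in>E. \<exists>x y. x \<in> V \<and> y \<in> V \<and> x \<noteq> y \<and> e = {x, y}) \<and>
     (\<forall>x\<in>V. \<forall>y\<in>V. (x, y) \<in> (adj E)\<^sup>*) \<and>
     (\<forall>e\<in>E. \<forall>x y. e = {x, y} \<longrightarrow> (x, y) \<notin> (adj (E - {e}))\<^sup>*)"

definition S_tree :: "'o link set \<Rightarrow> bool" where
  "S_tree \<Theta> \<longleftrightarrow> is_tree (occs \<Theta>) (sedges \<Theta>)"

datatype port = Above | Below | NoPort

text \<open>Label symbols: Lsym L is l_L, Rsym L is r_L (L a par-link).\<close>
datatype 'o sym = Lsym "'o link" | Rsym "'o link"

datatype 'o nkind = LabN "'o sym set" | ParNode "'o link"

text \<open>A deNM-tree: a set of nodes, a kind for each node (labeled node with its label set, or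
  par-node with its link), and undirected edges, each a 2-element set of endpoints
  (node, port); labeled nodes use port NoPort, par-nodes use Above / Below.\<close>
record ('n, 'o) dnm =
  nodes :: "'n set"
  kind :: "'n \<Rightarrow> 'o nkind"
  edges :: "('n \<times> port) set set"

datatype 'o tnode = PieceN "'o link" | ExtraN "'o link"

definition use_label :: "'o link set \<Rightarrow> 'o \<Rightarrow> 'o sym set" where
  "use_label \<Theta> x = {Rsym L' | L'. right_of \<Theta> x L'} \<union> {Lsym L' | L'. left_of \<Theta> x L'}"

fun T_kind :: "'o link set \<Rightarrow> 'o tnode \<Rightarrow> 'o nkind" where
  "T_kind \<Theta> (PieceN L) =
     (if is_par L then ParNode L else LabN (\<Union>c\<in>concls L. use_label \<Theta> c))"
| "T_kind \<Theta> (ExtraN (ParL a b c)) = LabN (use_label \<Theta> c)"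
| "T_kind \<Theta> (ExtraN _) = LabN {}"

text \<open>Endpoint by which the piece of link L is attached below, through its conclusion c.\<close>
fun lowerE :: "'o link set \<Rightarrow> 'o link \<Rightarrow> 'o \<Rightarrow> ('o tnode \<times> port) option" where
  "lowerE \<Theta> (ParL a b c) x =
     (if \<exists>L'. left_of \<Theta> x L' then Some (ExtraN (ParL a b c), NoPort)
      else if par_prem \<Theta> x then None
      else Some (PieceN (ParL a b c), Below))"
| "lowerE \<Theta> L x = Some (PieceN L, NoPort)"

text \<open>Endpoint by which the piece of link M is attached above, through its premise x.\<close>
fun upperE :: "'o link \<Rightarrow> 'o \<Rightarrow> ('o tnode \<times> port) option" where
  "upperE (TensL a b c) x = Some (PieceN (TensL a b c), NoPort)"
| "upperE (ParL a b c) x = (if x = a then Some (PieceN (ParL a b c), Above) else None)"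
| "upperE (IdL a b) x = None"

definition T_nodes :: "'o link set \<Rightarrow> 'o tnode set" where
  "T_nodes \<Theta> = PieceN ` \<Theta> \<union>
     {ExtraN (ParL a b c) | a b c. ParL a b c \<in> \<Theta> \<and> par_prem \<Theta> c}"

definition T_edges :: "'o link set \<Rightarrow> ('o tnode \<times> port) set set" where
  "T_edges \<Theta> =
     {{u, v} | L M x u v. L \<in> \<Theta> \<and> M \<in> \<Theta> \<and> x \<in> concls L \<and> x \<in> prems M \<and>
                         lowerE \<Theta> L x = Some u \<and> upperE M x = Some v} \<union>
     {{(PieceN (ParL a b c), Below), (ExtraN (ParL a b c), NoPort)} | a b c.
         ParL a b c \<in> \<Theta> \<and> par_prem \<Theta> c}"

definition T :: "'o link set \<Rightarrow> ('o tnode, 'o) dnm" where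
  "T \<Theta> = \<lparr>nodes = T_nodes \<Theta>, kind = T_kind \<Theta>, edges = T_edges \<Theta>\<rparr>"

text \<open>Definedness of T: the extreme-left DR-graph is a tree, and no ID-link falls in
  one of the undefined sub-cases.\<close>
definition T_defined :: "'o link set \<Rightarrow> bool" where
  "T_defined \<Theta> \<longleftrightarrow> S_tree \<Theta> \<and>
     (\<forall>a b. IdL a b \<in> \<Theta> \<longrightarrow>
        \<not> (par_prem \<Theta> a \<and> par_prem \<Theta> b) \<and>
        \<not> ((is_concl_of \<Theta> a \<or> (\<exists>L'. right_of \<Theta> a L')) \<and> par_prem \<Theta> b) \<and>
        \<not> ((is_concl_of \<Theta> b \<or> (\<exists>L'. right_of \<Theta> b L')) \<and> par_prem \<Theta> a))"

text \<open>A state of a run: current tree, active labeled node, and the set of par-nodes to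
  which local jump has already been applied.\<close>
type_synonym 'o astate = "('o tnode, 'o) dnm \<times> 'o tnode \<times> 'o tnode set"

definition par_elim :: "'o astate \<Rightarrow> 'o astate \<Rightarrow> bool" where
  "par_elim s s' \<longleftrightarrow> (\<exists>G a J p S L.
     s = (G, a, J) \<and> a \<in> nodes G \<and> kind G a = LabN S \<and>
     p \<in> nodes G \<and> kind G p = ParNode L \<and>
     {(a, NoPort), (p, Above)} \<in> edges G \<and> Lsym L \<in> S \<and> Rsym L \<in> S \<and>
     s' = (G\<lparr>nodes := nodes G - {p},
             edges := {e \<in> edges G. \<forall>y\<in>e. fst y \<noteq> p} \<union>
                      {{(a, NoPort), y} | y. {(p, Below), y} \<in> edges G}\<rparr>, a, J))"

definition union_rule :: "'o astate \<Rightarrow> 'o astate \<Rightarrow> bool" where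
  "union_rule s s' \<longleftrightarrow> (\<exists>G a J b S S'.
     s = (G, a, J) \<and> a \<in> nodes G \<and> kind G a = LabN S \<and>
     b \<in> nodes G \<and> b \<noteq> a \<and> kind G b = LabN S' \<and>
     {(a, NoPort), (b, NoPort)} \<in> edges G \<and>
     s' = (G\<lparr>nodes := nodes G - {b},
             kind := (kind G)(a := LabN (S \<union> S')),
             edges := (\<lambda>e. (\<lambda>(n, q). if n = b then (a, q) else (n, q)) ` e) `
                        (edges G - {{(a, NoPort), (b, NoPort)}})\<rparr>, a, J))"

text \<open>Local jump; it is only performed on par-nodes not jumped before (a repeated local jump
  makes Algorithm A stop with output no).\<close>
definition local_jump :: "'o astate \<Rightarrow> 'o astate \<Rightarrow> bool" where
  "local_jump s s' \<longleftrightarrow> (\<exists>G a J p L S b S'.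
     s = (G, a, J) \<and> a \<in> nodes G \<and> kind G a = LabN S \<and>
     p \<in> nodes G \<and> kind G p = ParNode L \<and>
     {(a, NoPort), (p, Below)} \<in> edges G \<and> p \<notin> J \<and>
     b \<in> nodes G \<and> kind G b = LabN S' \<and> Rsym L \<in> S' \<and>
     s' = (G, b, J \<union> {p}))"

definition algA_step :: "'o astate \<Rightarrow> 'o astate \<Rightarrow> bool" where
  "algA_step s s' \<longleftrightarrow> par_elim s s' \<or> union_rule s s' \<or> local_jump s s'"

definition algA_initial :: "'o link set \<Rightarrow> 'o astate \<Rightarrow> bool" where
  "algA_initial \<Theta> s \<longleftrightarrow> T_defined \<Theta> \<and>
     (\<exists>a S. a \<in> nodes (T \<Theta>) \<and> kind (T \<Theta>) a = LabN S \<and> s = (T \<Theta>, a, {}))"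

definition algA_infinite_run :: "'o link set \<Rightarrow> (nat \<Rightarrow> 'o astate) \<Rightarrow> bool" where
  "algA_infinite_run \<Theta> f \<longleftrightarrow> algA_initial \<Theta> (f 0) \<and> (\<forall>i. algA_step (f i) (f (Suc i)))"

end

theory Submission
  imports Defs
begin

text \<open>The tree T(\<Theta>) is finite, and every rewriting step either deletes a node
  (par-elimination, union) or marks a par-node that was not marked before (local jump, which
  Algorithm A never repeats). Hence the number of nodes plus the number of unmarked nodes
  strictly decreases along a run, which therefore cannot be infinite.\<close>

definition run_measure :: "'o astate \<Rightarrow> nat" where
  "run_measure s = card (nodes (fst s)) + card (nodes (fst s) - snd (snd s))"

lemma finite_T_nodes:
  assumes "finite \<Theta>"
  shows "finite (T_nodes \<Theta>)"
proof -
  have "{ExtraN (ParL a b c) | a b c. ParL a b c \<in> \<Theta> \<and> par_prem \<Theta> c} \<subseteq> ExtraN ` \<Theta>"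
    by auto
  with assms show ?thesis
    unfolding T_nodes_def by (simp add: finite_subset)
qed

lemma algA_step_deletes_node_or_jumps:
  assumes "algA_step s s'"
  obtains G a J p where "s = (G, a, J)" "p \<in> nodes G"
      "nodes (fst s') = nodes G - {p}" "snd (snd s') = J"
  | G a J p b where "s = (G, a, J)" "p \<in> nodes G" "p \<notin> J" "s' = (G, b, J \<union> {p})"
proof -
  consider "par_elim s s'" | "union_rule s s'" | "local_jump s s'"
    using assms unfolding algA_step_def by blast
  then show thesis
  proof cases
    case 1
    then show thesis unfolding par_elim_def by (elim exE conjE) (rule that(1), auto)
  next
    case 2
    then show thesis unfolding union_rule_def by (elim exE conjE) (rule that(1), auto)
  next
    case 3
    then show thesis unfolding local_jump_def by (elim exE conjE) (rule that(2), auto)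
  qed
qed

lemma algA_step_finite_nodes:
  assumes "algA_step s s'" "finite (nodes (fst s))"
  shows "finite (nodes (fst s'))"
  using assms by (cases rule: algA_step_deletes_node_or_jumps) auto

lemma algA_step_run_measure_less:
  assumes "algA_step s s'" "finite (nodes (fst s))"
  shows "run_measure s' < run_measure s"
  using assms(1)
proof (cases rule: algA_step_deletes_node_or_jumps)
  case (1 G a J p)
  have "finite (nodes G)"
    using assms(2) 1 by simp
  then have "card (nodes G - {p}) < card (nodes G)"
    using 1(2) by (rule card_Diff1_less)
  moreover have "card (nodes G - {p} - J) \<le> card (nodes G - J)"
    using \<open>finite (nodes G)\<close> by (intro card_mono) auto
  ultimately show ?thesis
    using 1 unfolding run_measure_def by simp
next
  case (2 G a J p b)
  have "nodes G - (J \<union> {p}) = (nodes G - J) - {p}"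
    by auto
  moreover have "card (nodes G - J - {p}) < card (nodes G - J)"
    using assms(2) 2 by (intro card_Diff1_less) auto
  ultimately show ?thesis
    using 2 unfolding run_measure_def by simp
qed

lemma algA_run_finite_nodes:
  assumes "finite \<Theta>" "algA_infinite_run \<Theta> f"
  shows "finite (nodes (fst (f i)))"
proof (induction i)
  case 0
  then show ?case
    using assms finite_T_nodes
    unfolding algA_infinite_run_def algA_initial_def T_def by auto
next
  case (Suc i)
  then show ?case
    using assms(2) algA_step_finite_nodes unfolding algA_infinite_run_def by blast
qed

theorem proposition3:
  fixes \<phi> :: "'o \<Rightarrow> form" and \<Theta> :: "'o link set"
  assumes "proof_structure \<phi> \<Theta>"
  shows "\<not> (\<exists>f. algA_infinite_run \<Theta> f)"
proof
  assume "\<exists>f. algA_infinite_run \<Theta> f"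
  then obtain f where run: "algA_infinite_run \<Theta> f" ..
  have "finite \<Theta>"
    using assms unfolding proof_structure_def by simp
  have "(f (Suc i), f i) \<in> measure run_measure" for i
  proof -
    have "algA_step (f i) (f (Suc i))"
      using run unfolding algA_infinite_run_def by simp
    with algA_run_finite_nodes[OF \<open>finite \<Theta>\<close> run]
    show ?thesis by (simp add: algA_step_run_measure_less)
  qed
  then show False
    using wf_iff_no_infinite_down_chain[of "measure run_measure"] by blast
qed

end
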